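(* Let $X\in\mathbb{R}^{n\times d}$ with rows $x_1,\dots,x_n$, weighted by $w\in\mathbb{R}^n_{>0}$, be $\mu$-complex. Let $U$ be a matrix whose columns form an orthonormal basis of the column space of $D_wX$, with rows $U_i$. If $i\in[n]$ and $\beta\in\mathbb{R}^d$ satisfy $x_i\beta\ge 0.5$, then $w_i\,g(x_i\beta)\le 2(1+\mu)\|U_i\|_2\, f_w(X\beta)$.
   Context: $g(z)=\ln(1+e^z)$ and $f_w(X\beta)=\sum_{j=1}^n w_j g(x_j\beta)$. $D_w$ is the diagonal matrix with $(D_w)_{ii}=w_i$. For a vector $v$, $v^+$ and $v^-$ denote the vectors of its positive and negative entries. $\mu_w(X)=\sup_{\beta:\,D_wX\beta\neq0}\|(D_wX\beta)^+\|_1/\|(D_wX\beta)^-\|_1$, and $X$ weighted by $w$ is $\mu$-complex if $\mu_w(X)\le\mu$. *)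

theory Defs
  imports "HOL-Analysis.Analysis"
begin

definition g :: "real \<Rightarrow> real" where
  "g z = ln (1 + exp z)"

definition f_w :: "real^'n \<Rightarrow> real^'n \<Rightarrow> real" where
  "f_w w v = (\<Sum>j\<in>UNIV. w $ j * g (v $ j))"

definition Dw :: "real^'n \<Rightarrow> real^'n^'n" where
  "Dw w = (\<chi> i j. if i = j then w $ i else 0)"

definition pos_part :: "real^'n \<Rightarrow> real^'n" where
  "pos_part v = (\<chi> i. max (v $ i) 0)"

definition neg_part :: "real^'n \<Rightarrow> real^'n" where
  "neg_part v = (\<chi> i. min (v $ i) 0)"

definition l1norm :: "real^'n \<Rightarrow> real" where
  "l1norm v = (\<Sum>i\<in>UNIV. \<bar>v $ i\<bar>)"

definition ratio_pm :: "real^'n \<Rightarrow> ereal" where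
  "ratio_pm v = (if l1norm (neg_part v) = 0 then \<infinity>
                 else ereal (l1norm (pos_part v) / l1norm (neg_part v)))"

definition mu_w :: "real^'n \<Rightarrow> real^'d^'n \<Rightarrow> ereal" where
  "mu_w w X = (SUP \<beta> \<in> {\<beta>. (Dw w ** X) *v \<beta> \<noteq> 0}. ratio_pm ((Dw w ** X) *v \<beta>))"

definition mu_complex :: "real \<Rightarrow> real^'n \<Rightarrow> real^'d^'n \<Rightarrow> bool" where
  "mu_complex \<mu> w X \<longleftrightarrow> mu_w w X \<le> ereal \<mu>"

definition orthonormal_col_basis :: "real^'k^'n \<Rightarrow> real^'m^'n \<Rightarrow> bool" where
  "orthonormal_col_basis U M \<longleftrightarrow>
     (\<forall>j. norm (column j U) = 1) \<and>
     (\<forall>j j'. j \<noteq> j' \<longrightarrow> column j U \<bullet> column j' U = 0) \<and>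
     span (columns U) = range (\<lambda>\<beta>. M *v \<beta>)"

end

theory Submission
  imports Defs
begin

text \<open>Put \<open>z = D\<^sub>w X \<beta>\<close>. Since \<open>z\<close> lies in the column space of \<open>U\<close>, we have
  \<open>z = U U\<^sup>T z\<close>, so Cauchy--Schwarz gives \<open>z\<^sub>i \<le> \<parallel>U\<^sub>i\<parallel>\<^sub>2 \<parallel>z\<parallel>\<^sub>2 \<le> \<parallel>U\<^sub>i\<parallel>\<^sub>2 \<parallel>z\<parallel>\<^sub>1\<close>.
  Applying \<open>\<mu>\<close>-complexity to \<open>-\<beta>\<close> bounds the negative part of \<open>z\<close> by \<open>\<mu>\<close> times its positive
  part, so \<open>\<parallel>z\<parallel>\<^sub>1 \<le> (1 + \<mu>) \<parallel>z\<^sup>+\<parallel>\<^sub>1\<close>, and \<open>\<parallel>z\<^sup>+\<parallel>\<^sub>1 \<le> f\<^sub>w(X\<beta>)\<close> because \<open>g z \<ge> max z 0\<close>.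
  Finally \<open>g z \<le> 2 z\<close> for \<open>z \<ge> 1/2\<close>, so \<open>w\<^sub>i g(x\<^sub>i \<beta>) \<le> 2 z\<^sub>i\<close>.\<close>

lemma g_le_double:
  assumes "z \<ge> 1/2"
  shows "g z \<le> 2 * z"
proof -
  have "exp (1/2::real) \<ge> 1.625"
    using exp_lower_Taylor_quadratic[of "1/2::real"] by (simp add: power2_eq_square)
  moreover have "exp z \<ge> exp (1/2)" using assms by simp
  ultimately have "exp z \<ge> 1.625" by linarith
  \<comment> \<open>\<open>1 + t \<le> t\<^sup>2\<close> holds for \<open>t \<ge> (1 + \<surd>5)/2 \<approx> 1.618\<close>\<close>
  then have "(exp z - 1.625) * (exp z + 0.625) \<ge> 0" by (intro mult_nonneg_nonneg) auto
  then have "1 + exp z \<le> exp z * exp z" by (simp add: algebra_simps)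
  also have "\<dots> = exp (2 * z)" by (metis exp_add mult_2)
  finally have "ln (1 + exp z) \<le> ln (exp (2 * z))"
    by (intro ln_mono) (auto simp: add_pos_pos)
  then show ?thesis by (simp add: g_def)
qed

lemma max_0_le_g: "max z 0 \<le> g z"
proof -
  have "ln (exp z) \<le> ln (1 + exp z)" by (intro ln_mono) auto
  moreover have "ln 1 \<le> ln (1 + exp z)" by (intro ln_mono) auto
  ultimately show ?thesis by (simp add: g_def)
qed

lemma Dw_mult_vec_nth: "(Dw w *v v) $ j = w $ j * v $ j"
proof -
  have "(Dw w *v v) $ j = (\<Sum>k\<in>UNIV. if k = j then w $ j * v $ j else 0)"
    unfolding Dw_def matrix_vector_mult_def vec_lambda_beta by (intro sum.cong) auto
  then show ?thesis by simp
qed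

lemma l1norm_pos_part_neg_part: "l1norm v = l1norm (pos_part v) + l1norm (neg_part v)"
  unfolding l1norm_def pos_part_def neg_part_def sum.distrib[symmetric]
  by (intro sum.cong) auto

lemma l1norm_pos_part_uminus: "l1norm (pos_part (- v)) = l1norm (neg_part v)"
  unfolding l1norm_def pos_part_def neg_part_def by (intro sum.cong) auto

lemma l1norm_neg_part_uminus: "l1norm (neg_part (- v)) = l1norm (pos_part v)"
  unfolding l1norm_def pos_part_def neg_part_def by (intro sum.cong) auto

lemma l1norm_pos_part_le_f_w:
  assumes "\<forall>j. w $ j \<ge> 0"
  shows "l1norm (pos_part (Dw w *v v)) \<le> f_w w v"
  unfolding l1norm_def f_w_def
proof (intro sum_mono)
  fix j
  have "\<bar>pos_part (Dw w *v v) $ j\<bar> = w $ j * max (v $ j) 0"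
    using assms by (auto simp: pos_part_def Dw_mult_vec_nth max_def mult_le_0_iff intro: order.antisym)
  also have "\<dots> \<le> w $ j * g (v $ j)"
    using assms max_0_le_g by (simp add: mult_left_mono)
  finally show "\<bar>pos_part (Dw w *v v) $ j\<bar> \<le> w $ j * g (v $ j)" .
qed

lemma mu_complex_pos_part_le:
  assumes "mu_complex \<mu> w X"
  shows "l1norm (pos_part ((Dw w ** X) *v \<beta>)) \<le> \<mu> * l1norm (neg_part ((Dw w ** X) *v \<beta>))"
proof (cases "(Dw w ** X) *v \<beta> = 0")
  case True
  then show ?thesis by (simp add: l1norm_def pos_part_def neg_part_def)
next
  case False
  let ?v = "(Dw w ** X) *v \<beta>"
  have "ratio_pm ?v \<le> mu_w w X"
    unfolding mu_w_def using False by (intro SUP_upper) auto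
  then have ratio: "ratio_pm ?v \<le> ereal \<mu>"
    using assms unfolding mu_complex_def by simp
  then have "l1norm (neg_part ?v) \<noteq> 0" by (auto simp: ratio_pm_def)
  moreover have "l1norm (neg_part ?v) \<ge> 0" by (simp add: l1norm_def sum_nonneg)
  ultimately show ?thesis using ratio by (simp add: ratio_pm_def divide_le_eq)
qed

lemma mu_complex_l1norm_le:
  assumes "mu_complex \<mu> w X"
  shows "l1norm ((Dw w ** X) *v \<beta>) \<le> (1 + \<mu>) * l1norm (pos_part ((Dw w ** X) *v \<beta>))"
proof -
  let ?z = "(Dw w ** X) *v \<beta>"
  have "(Dw w ** X) *v (- \<beta>) = - ?z"
    by (rule linear_neg[OF matrix_vector_mul_linear])
  then have "l1norm (neg_part ?z) \<le> \<mu> * l1norm (pos_part ?z)"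
    using mu_complex_pos_part_le[OF assms, of "- \<beta>"]
    by (simp add: l1norm_pos_part_uminus l1norm_neg_part_uminus)
  then show ?thesis
    using l1norm_pos_part_neg_part[of ?z] by (simp add: algebra_simps)
qed

lemma orthonormal_col_basis_project:
  assumes "orthonormal_col_basis U M" and "z \<in> span (columns U)"
  shows "U *v (transpose U *v z) = z"
proof -
  have "transpose U *v column k U = axis k 1" for k
  proof -
    have "(transpose U *v column k U) $ j = column j U \<bullet> column k U" for j
      by (simp add: matrix_vector_mult_def transpose_def column_def inner_vec_def)
    moreover have "column k U \<bullet> column k U = 1"
      using assms(1) unfolding orthonormal_col_basis_def by (metis norm_eq_1)
    ultimately show ?thesis
      using assms(1) unfolding orthonormal_col_basis_def by (auto simp: vec_eq_iff axis_def)
  qed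
  then have "columns U \<subseteq> {v. U *v (transpose U *v v) = v}"
    by (auto simp: columns_def matrix_vector_mult_basis)
  moreover have "subspace {v. U *v (transpose U *v v) = v}"
    unfolding subspace_def
    by (auto simp del: transpose_matrix_vector
        simp add: matrix_vector_right_distrib matrix_vector_mult_scaleR)
  ultimately have "span (columns U) \<subseteq> {v. U *v (transpose U *v v) = v}"
    by (rule span_minimal)
  then show ?thesis using assms(2) by auto
qed

lemma orthonormal_col_basis_nth_le:
  assumes "orthonormal_col_basis U M" and "z \<in> span (columns U)"
  shows "z $ i \<le> norm (U $ i) * norm z"
proof -
  define c where "c = transpose U *v z"
  have z: "U *v c = z"
    using orthonormal_col_basis_project[OF assms] by (simp add: c_def)
  have "c \<bullet> c = (c v* transpose U) \<bullet> z"
    unfolding c_def by (rule dot_lmul_matrix[symmetric])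
  also have "\<dots> = z \<bullet> z" using z by (simp add: c_def)
  finally have "norm c = norm z" by (simp add: norm_eq_sqrt_inner)
  have "z $ i = U $ i \<bullet> c"
    unfolding z[symmetric] by (simp add: inner_vec_def matrix_vector_mult_def)
  also have "\<dots> \<le> norm (U $ i) * norm c" by (rule norm_cauchy_schwarz)
  finally show ?thesis using \<open>norm c = norm z\<close> by simp
qed

theorem lemma7:
  fixes X :: "real^'d^'n" and w :: "real^'n" and \<mu> :: real
    and U :: "real^'k^'n" and i :: 'n and \<beta> :: "real^'d"
  assumes "\<forall>j. w $ j > 0"
    and "mu_complex \<mu> w X"
    and "orthonormal_col_basis U (Dw w ** X)"
    and "(X $ i) \<bullet> \<beta> \<ge> 1/2"
  shows "w $ i * g ((X $ i) \<bullet> \<beta>) \<le> 2 * (1 + \<mu>) * norm (U $ i) * f_w w (X *v \<beta>)"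
proof -
  define z where "z = (Dw w ** X) *v \<beta>"
  define P where "P = l1norm (pos_part z)"
  have z_Dw: "z = Dw w *v (X *v \<beta>)" by (simp add: z_def matrix_vector_mul_assoc)
  have "(X *v \<beta>) $ i = X $ i \<bullet> \<beta>"
    by (simp add: matrix_vector_mult_def inner_vec_def mult.commute)
  then have zi: "z $ i = w $ i * (X $ i \<bullet> \<beta>)"
    by (simp only: z_Dw Dw_mult_vec_nth)
  have "z \<in> span (columns U)"
    using assms(3) unfolding orthonormal_col_basis_def z_def by blast
  then have "z $ i \<le> norm (U $ i) * norm z"
    by (rule orthonormal_col_basis_nth_le[OF assms(3)])
  also have "\<dots> \<le> norm (U $ i) * ((1 + \<mu>) * P)"
    using norm_le_l1_cart[of z] mu_complex_l1norm_le[OF assms(2), of \<beta>]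
    by (intro mult_left_mono) (simp_all add: l1norm_def P_def z_def)
  finally have zi_le: "z $ i \<le> norm (U $ i) * ((1 + \<mu>) * P)" .
  moreover have "0 < z $ i" using zi assms(1,4) by simp
  ultimately have "0 < norm (U $ i) * ((1 + \<mu>) * P)" by linarith
  then have "0 < (1 + \<mu>) * P" by (simp add: zero_less_mult_iff)
  moreover have "0 \<le> P" by (simp add: P_def l1norm_def sum_nonneg)
  ultimately have "0 < 1 + \<mu>" by (auto simp: zero_less_mult_iff)
  have "w $ i * g (X $ i \<bullet> \<beta>) \<le> 2 * z $ i"
    using g_le_double[OF assms(4)] assms(1) zi by (simp add: mult_left_mono)
  also have "\<dots> \<le> 2 * (norm (U $ i) * ((1 + \<mu>) * P))"
    using zi_le by simp
  also have "\<dots> \<le> 2 * (norm (U $ i) * ((1 + \<mu>) * f_w w (X *v \<beta>)))"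
    using l1norm_pos_part_le_f_w[of w "X *v \<beta>"] assms(1) \<open>0 < 1 + \<mu>\<close>
    by (simp add: P_def z_Dw less_imp_le mult_left_mono)
  finally show ?thesis by (simp add: algebra_simps)
qed

end
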